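(* For $\mathbf{x}=(x_0,x_1,x_2),\ \mathbf{y}=(y_0,y_1,y_2)\in\mathbb{R}^3$ let $\langle\mathbf{x},\mathbf{y}\rangle:=x_0y_0-x_1y_1-x_2y_2$. For parameters $\alpha,\beta$ set $q=\alpha-\beta$ and define $$\hat k(\mathbf{x},\mathbf{y},q)=\frac{\langle\mathbf{x},\mathbf{x}\rangle-\langle\mathbf{y},\mathbf{y}\rangle+q^2}{\langle\mathbf{x}+\mathbf{y},\mathbf{x}+\mathbf{y}\rangle+q^2},\qquad \hat{\mathbf{r}}(\mathbf{x},\mathbf{y},q)=\frac{(x_1y_2-x_2y_1,\ x_0y_2-x_2y_0,\ x_1y_0-x_0y_1)}{\langle\mathbf{x}+\mathbf{y},\mathbf{x}+\mathbf{y}\rangle+q^2}.$$ Define $\hat{\mathbf{R}}_{\alpha,\beta}:(\mathbf{x},\mathbf{y})\mapsto(\mathbf{u},\mathbf{v})$ by $$\mathbf{u}=\hat k(\mathbf{x},\mathbf{y},q)\,\mathbf{x}+\big(1-\hat k(\mathbf{y},\mathbf{x},q)\big)\mathbf{y}+2q\,\hat{\mathbf{r}}(\mathbf{x},\mathbf{y},q),$$ $$\mathbf{v}=\big(1-\hat k(\mathbf{x},\mathbf{y},q)\big)\mathbf{x}+\hat k(\mathbf{y},\mathbf{x},q)\,\mathbf{y}-2q\,\hat{\mathbf{r}}(\mathbf{x},\mathbf{y},q).$$ Then $\hat{\mathbf{R}}_{\alpha,\beta}$ is a parametric quadrirational Yang--Baxter map which satisfies the invariant conditions $$\mathbf{u}+\mathbf{v}=\mathbf{x}+\mathbf{y},\quad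 \langle\mathbf{u},\mathbf{u}\rangle=\langle\mathbf{x},\mathbf{x}\rangle,\quad \langle\mathbf{v},\mathbf{v}\rangle=\langle\mathbf{y},\mathbf{y}\rangle,$$ and admits a Lax representation $\mathbf{L}(\mathbf{u},\alpha,\zeta)\mathbf{L}(\mathbf{v},\beta,\zeta)=\mathbf{L}(\mathbf{y},\beta,\zeta)\mathbf{L}(\mathbf{x},\alpha,\zeta)$ with Lax matrix $$\mathbf{L}(\mathbf{x},\alpha,\zeta)=\begin{pmatrix}\zeta+i(x_2-\alpha) & x_0+x_1\\ x_0-x_1 & \zeta-i(x_2+\alpha)\end{pmatrix}.$$
   Context: A parametric Yang--Baxter map is a family of maps $R_{\alpha,\beta}:\mathcal{X}\times\mathcal{X}\to\mathcal{X}\times\mathcal{X}$, $R_{\alpha,\beta}(x,y)=(u(x,\alpha,y,\beta),v(x,\alpha,y,\beta))$, such that the map $((x,\alpha),(y,\beta))\mapsto((u,\alpha),(v,\beta))$ on $(\mathcal{X}\times\mathcal{I})^2$ satisfies the set-theoretical Yang--Baxter equation $R_{23}\circ R_{13}\circ R_{12}=R_{12}\circ R_{13}\circ R_{23}$, where $R_{ij}$ denotes the action of the map on the $i$-th and $j$-th factors of a triple product (e.g. $R_{13}(x,y,z)=(u(x,z),y,v(x,z))$). Equivalently, $R^{23}_{\beta,\gamma}\circ R^{13}_{\alpha,\gamma}\circ R^{12}_{\alpha,\beta}=R^{12}_{\alpha,\beta}\circ R^{13}_{\alpha,\gamma}\circ R^{23}_{\beta,\gamma}$. It is quadrirational if for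 fixed $y$ and fixed $x$ the maps $u(\cdot,y)$ and $v(x,\cdot)$ are birational isomorphisms of $\mathcal{X}$. Here $\mathcal{X}=\mathbb{R}^3$ and maps are understood generically, where defined; $i=\sqrt{-1}$ and $\zeta\in\mathbb{C}$ is a spectral parameter. *)

theory Defs
  imports "HOL-Analysis.Analysis"
begin

definition mink :: "real^3 \<Rightarrow> real^3 \<Rightarrow> real" where
  "mink x y = x$0 * y$0 - x$1 * y$1 - x$2 * y$2"

definition den :: "real^3 \<Rightarrow> real^3 \<Rightarrow> real \<Rightarrow> real" where
  "den x y q = mink (x + y) (x + y) + q^2"

definition khat :: "real^3 \<Rightarrow> real^3 \<Rightarrow> real \<Rightarrow> real" where
  "khat x y q = (mink x x - mink y y + q^2) / den x y q"

definition rhat :: "real^3 \<Rightarrow> real^3 \<Rightarrow> real \<Rightarrow> real^3" where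
  "rhat x y q = (1 / den x y q) *\<^sub>R
     (\<chi> i. if i = 0 then x$1 * y$2 - x$2 * y$1
            else if i = 1 then x$0 * y$2 - x$2 * y$0
            else x$1 * y$0 - x$0 * y$1)"

definition Rhat :: "real \<Rightarrow> real \<Rightarrow> (real^3) \<times> (real^3) \<Rightarrow> (real^3) \<times> (real^3)" where
  "Rhat a b xy = (let x = fst xy; y = snd xy; q = a - b in
     (khat x y q *\<^sub>R x + (1 - khat y x q) *\<^sub>R y + (2 * q) *\<^sub>R rhat x y q,
      (1 - khat x y q) *\<^sub>R x + khat y x q *\<^sub>R y - (2 * q) *\<^sub>R rhat x y q))"

definition Rhat_dom :: "real \<Rightarrow> real \<Rightarrow> (real^3) \<times> (real^3) \<Rightarrow> bool" where
  "Rhat_dom a b xy = (den (fst xy) (snd xy) (a - b) \<noteq> 0)"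

text \<open>R a b : X x X -> X x X, defined on D a b. The Yang--Baxter equation
 R23 o R13 o R12 = R12 o R13 o R23 is required at every point where all
 the intermediate maps on both sides are defined.\<close>
definition parametric_YB_map ::
  "('p \<Rightarrow> 'p \<Rightarrow> 'x \<times> 'x \<Rightarrow> bool) \<Rightarrow> ('p \<Rightarrow> 'p \<Rightarrow> 'x \<times> 'x \<Rightarrow> 'x \<times> 'x) \<Rightarrow> bool" where
  "parametric_YB_map D R =
    (\<forall>a b c x y z.
       (let (x1, y1) = R a b (x, y);
            (x2, z2) = R a c (x1, z);
            (y3, z3) = R b c (y1, z2);
            (y1', z1') = R b c (y, z);
            (x2', z2') = R a c (x, z1');
            (x3', y3') = R a b (x2', y1')
        in (D a b (x, y) \<and> D a c (x1, z) \<and> D b c (y1, z2) \<and>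
            D b c (y, z) \<and> D a c (x, z1') \<and> D a b (x2', y1'))
           \<longrightarrow> (x2, y3, z3) = (x3', y3', z2')))"

definition poly3 :: "(real^3 \<Rightarrow> real) \<Rightarrow> bool" where
  "poly3 p = (\<exists>(c :: nat \<times> nat \<times> nat \<Rightarrow> real) S. finite S \<and>
     (\<forall>x. p x = (\<Sum>(i, j, k)\<in>S. c (i, j, k) * x$0 ^ i * x$1 ^ j * x$2 ^ k)))"

definition nonzero_poly3 :: "(real^3 \<Rightarrow> real) \<Rightarrow> bool" where
  "nonzero_poly3 p = (poly3 p \<and> (\<exists>x. p x \<noteq> 0))"

definition rational_map3 :: "(real^3 \<Rightarrow> real^3) \<Rightarrow> bool" where
  "rational_map3 f = (\<exists>P Q. (\<forall>i::3. poly3 (P i)) \<and> nonzero_poly3 Q \<and>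
     (\<forall>x. Q x \<noteq> 0 \<longrightarrow> f x = (\<chi> i. P i x / Q x)))"

definition birational3 :: "(real^3 \<Rightarrow> real^3) \<Rightarrow> bool" where
  "birational3 f = (rational_map3 f \<and> (\<exists>g h1 h2. rational_map3 g \<and>
     nonzero_poly3 h1 \<and> nonzero_poly3 h2 \<and>
     (\<forall>x. h1 x \<noteq> 0 \<longrightarrow> g (f x) = x) \<and>
     (\<forall>y. h2 y \<noteq> 0 \<longrightarrow> f (g y) = y)))"

definition quadrirational3 :: "('p \<Rightarrow> 'p \<Rightarrow> (real^3) \<times> (real^3) \<Rightarrow> (real^3) \<times> (real^3)) \<Rightarrow> bool" where
  "quadrirational3 R = (\<forall>a b.
     (\<exists>h. nonzero_poly3 h \<and> (\<forall>y. h y \<noteq> 0 \<longrightarrow> birational3 (\<lambda>x. fst (R a b (x, y))))) \<and>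
     (\<exists>h. nonzero_poly3 h \<and> (\<forall>x. h x \<noteq> 0 \<longrightarrow> birational3 (\<lambda>y. snd (R a b (x, y))))))"

definition Lax :: "real^3 \<Rightarrow> real \<Rightarrow> complex \<Rightarrow> complex^2^2" where
  "Lax x a z = (\<chi> i j.
     if i = 1 then (if j = 1 then z + \<i> * (complex_of_real (x$2) - complex_of_real a)
                    else complex_of_real (x$0 + x$1))
     else (if j = 1 then complex_of_real (x$0 - x$1)
           else z - \<i> * (complex_of_real (x$2) + complex_of_real a)))"

end

theory Submission
  imports Defs
begin

(*
  Write s = x + y and q = alpha - beta. Then u = rot x s q and v = rot y s q, where
  rot x s q = x + 2 (<x,s> s - <s,s> x + q mcross x s) / (<s,s> + q^2)
  is an isometry of the Minkowski form fixing s, so <u,u> = <x,x> and <v,v> = <y,y>; moreover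
  rot x s q + rot y s q = s.

  The point u is the unique solution of the linear system <u - x, s> = 0, q (u - x) = mcross (u + x) s.
  For s = x + p and <u,u> = <x,x> this system is invariant under (x, u, p) |-> (u, x, -p), so the
  inverse of x |-> rot x (x + y) q is u |-> rot u (u - y) q, and the map is quadrirational.

  The same system says that G = L(s,0,0) + i q, of determinant -(<s,s> + q^2), intertwines
  L(x,alpha,0) with L(u,alpha,0) and L(y,beta,0) with L(v,beta,0). As G = L(y,beta,0) - adj L(x,alpha,0),
  cancelling G gives the Lax equation. On both sides of the Yang-Baxter equation the products of the
  intertwiners are the same matrix in x, y, z; it intertwines x with both first outputs, and z with
  both third outputs, which therefore coincide. The middle outputs agree by conservation of the sum.
*)

lemma exhaust_3_from_0: "(i::3) = 0 \<or> i = 1 \<or> i = 2"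
proof -
  have "(3::3) = 0" by simp
  then show ?thesis
    using exhaust_3[of i] by metis
qed

lemma vec3_eq_iff: "(x::'a^3) = y \<longleftrightarrow> x$0 = y$0 \<and> x$1 = y$1 \<and> x$2 = y$2"
  unfolding vec_eq_iff by (metis exhaust_3_from_0)

section \<open>Minkowski geometry\<close>

lemma mink_commute: "mink x y = mink y x"
  by (simp add: mink_def algebra_simps)

lemma mink_add_left: "mink (x + y) z = mink x z + mink y z"
  and mink_add_right: "mink z (x + y) = mink z x + mink z y"
  and mink_diff_left: "mink (x - y) z = mink x z - mink y z"
  and mink_diff_right: "mink z (x - y) = mink z x - mink z y"
  and mink_scaleR_left: "mink (c *\<^sub>R x) z = c * mink x z"
  and mink_scaleR_right: "mink z (c *\<^sub>R x) = c * mink z x"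
  and mink_minus_left: "mink (- x) z = - mink x z"
  and mink_minus_right: "mink z (- x) = - mink z x"
  and mink_zero_left: "mink 0 z = 0"
  and mink_zero_right: "mink z 0 = 0"
  by (simp_all add: mink_def algebra_simps)

lemmas mink_bilinear = mink_add_left mink_add_right mink_diff_left mink_diff_right
  mink_scaleR_left mink_scaleR_right mink_minus_left mink_minus_right mink_zero_left mink_zero_right

definition mcross :: "real^3 \<Rightarrow> real^3 \<Rightarrow> real^3" where
  "mcross x y = (\<chi> i. if i = 0 then x$1 * y$2 - x$2 * y$1
                      else if i = 1 then x$0 * y$2 - x$2 * y$0
                      else x$1 * y$0 - x$0 * y$1)"

lemma mcross_component [simp]:
  "mcross x y $ 0 = x$1 * y$2 - x$2 * y$1"
  "mcross x y $ 1 = x$0 * y$2 - x$2 * y$0"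
  "mcross x y $ 2 = x$1 * y$0 - x$0 * y$1"
  by (simp_all add: mcross_def)

lemma mcross_add_left: "mcross (x + y) z = mcross x z + mcross y z"
  and mcross_add_right: "mcross z (x + y) = mcross z x + mcross z y"
  and mcross_diff_left: "mcross (x - y) z = mcross x z - mcross y z"
  and mcross_diff_right: "mcross z (x - y) = mcross z x - mcross z y"
  and mcross_scaleR_left: "mcross (c *\<^sub>R x) z = c *\<^sub>R mcross x z"
  and mcross_scaleR_right: "mcross z (c *\<^sub>R x) = c *\<^sub>R mcross z x"
  and mcross_minus_left: "mcross (- x) z = - mcross x z"
  and mcross_minus_right: "mcross z (- x) = - mcross z x"
  and mcross_self: "mcross x x = 0"
  by (simp_all add: vec3_eq_iff algebra_simps)

lemmas mcross_bilinear = mcross_add_left mcross_add_right mcross_diff_left mcross_diff_right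
  mcross_scaleR_left mcross_scaleR_right mcross_minus_left mcross_minus_right mcross_self

lemma mcross_anticommute: "mcross y x = - mcross x y"
  by (simp add: vec3_eq_iff)

lemma mink_mcross_orthogonal:
  "mink (mcross x y) x = 0" "mink (mcross x y) y = 0"
  "mink x (mcross x y) = 0" "mink y (mcross x y) = 0"
  by (simp_all add: mink_def algebra_simps)

lemma mcross_mcross: "mcross (mcross x s) s = mink x s *\<^sub>R s - mink s s *\<^sub>R x"
  by (simp add: vec3_eq_iff mink_def algebra_simps)

lemma mink_mcross_mcross: "mink (mcross x s) (mcross x s) = mink s s * mink x x - (mink x s)\<^sup>2"
  by (simp add: mink_def algebra_simps power2_eq_square)

definition mden :: "real^3 \<Rightarrow> real \<Rightarrow> real" where
  "mden s q = mink s s + q\<^sup>2"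

lemma den_eq_mden: "den x y q = mden (x + y) q"
  by (simp add: den_def mden_def)

lemma mden_minus: "mden (- s) q = mden s q"
  by (simp add: mden_def mink_bilinear)

definition rot :: "real^3 \<Rightarrow> real^3 \<Rightarrow> real \<Rightarrow> real^3" where
  "rot x s q = x + (2 / mden s q) *\<^sub>R (mink x s *\<^sub>R s - mink s s *\<^sub>R x + q *\<^sub>R mcross x s)"

definition rot_eqs :: "real^3 \<Rightarrow> real^3 \<Rightarrow> real^3 \<Rightarrow> real \<Rightarrow> bool" where
  "rot_eqs u x s q \<longleftrightarrow> mink (u - x) s = 0 \<and> q *\<^sub>R (u - x) = mcross (u + x) s"

lemma mink_rot:
  assumes "mden s q \<noteq> 0"
  shows "mink (rot x s q) (rot x s q) = mink x x"
proof -
  define c where "c = 2 / mden s q"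
  have "c * mden s q = 2"
    using assms by (simp add: c_def)
  then have c: "c * (mink s s + q\<^sup>2) = 2"
    by (simp add: mden_def)
  have "mink (rot x s q) (rot x s q)
      = mink x x + c * (c * (mink s s + q\<^sup>2) - 2) * (mink s s * mink x x - (mink x s)\<^sup>2)"
    unfolding rot_def c_def[symmetric]
    by (simp add: mink_bilinear mink_mcross_orthogonal mink_mcross_mcross mink_commute[of s x]
        algebra_simps power2_eq_square)
  then show ?thesis
    using c by simp
qed

lemma rot_eqs_rot:
  assumes "mden s q \<noteq> 0"
  shows "rot_eqs (rot x s q) x s q"
proof -
  define c where "c = 2 / mden s q"
  have "c * mden s q = 2"
    using assms by (simp add: c_def)
  then have c: "c * (mink s s + q\<^sup>2) = 2"
    by (simp add: mden_def)
  define w where "w = mink x s *\<^sub>R s - mink s s *\<^sub>R x + q *\<^sub>R mcross x s"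
  have diff: "rot x s q - x = c *\<^sub>R w" and sum: "rot x s q + x = 2 *\<^sub>R x + c *\<^sub>R w"
    by (simp_all add: rot_def c_def w_def scaleR_2)
  have "mink (c *\<^sub>R w) s = 0"
    by (simp add: w_def mink_bilinear mink_mcross_orthogonal mink_commute[of s x] algebra_simps)
  moreover have "mcross (2 *\<^sub>R x + c *\<^sub>R w) s
      = (2 - c * mink s s) *\<^sub>R mcross x s + (c * q) *\<^sub>R (mink x s *\<^sub>R s - mink s s *\<^sub>R x)"
    by (simp add: w_def mcross_bilinear mcross_mcross algebra_simps)
  moreover have "2 - c * mink s s = c * q * q"
    using c by (simp add: algebra_simps power2_eq_square)
  ultimately show ?thesis
    unfolding rot_eqs_def diff sum by (simp add: w_def algebra_simps)
qed

lemma rot_eqs_homogeneous_trivial: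
  assumes "mden s q \<noteq> 0" "mink w s = 0" "q *\<^sub>R w = mcross w s"
  shows "w = 0"
proof -
  have "(q * q) *\<^sub>R w = mcross (q *\<^sub>R w) s"
    using assms(3) by (metis mcross_scaleR_left scaleR_scaleR)
  also have "\<dots> = - mink s s *\<^sub>R w"
    using assms(2,3) by (simp add: mcross_mcross)
  finally have "(q\<^sup>2 + mink s s) *\<^sub>R w = 0"
    by (simp add: algebra_simps power2_eq_square)
  then show ?thesis
    using assms(1) by (simp add: mden_def add.commute)
qed

lemma rot_eqs_unique:
  assumes "mden s q \<noteq> 0" "rot_eqs u x s q"
  shows "u = rot x s q"
proof -
  let ?r = "rot x s q"
  have r: "rot_eqs ?r x s q"
    using rot_eqs_rot assms(1) .
  have "u - ?r = (u - x) - (?r - x)" and "u - ?r = (u + x) - (?r + x)"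
    by simp_all
  then have "mink (u - ?r) s = 0" and "q *\<^sub>R (u - ?r) = mcross (u - ?r) s"
    using r assms(2) unfolding rot_eqs_def
    by (metis mink_diff_left diff_zero, metis mcross_diff_left scaleR_diff_right)
  then show ?thesis
    using rot_eqs_homogeneous_trivial assms(1) by force
qed

lemma rot_eqs_swap:
  assumes "rot_eqs u x (x + p) q" "mink u u = mink x x"
  shows "rot_eqs x u (u - p) q"
proof -
  have "mink u x + mink u p - mink x x - mink x p = 0"
    and "q *\<^sub>R (u - x) = mcross u x + mcross u p + mcross x p"
    using assms(1) unfolding rot_eqs_def by (simp_all add: mink_bilinear mcross_bilinear algebra_simps)
  then show ?thesis
    using assms(2) unfolding rot_eqs_def
    by (simp add: mink_bilinear mcross_bilinear mink_commute[of x u] mink_commute[of p u]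
        mink_commute[of p x] mcross_anticommute[of u x] algebra_simps)
qed

lemma rot_rot_inverse:
  assumes "mden (x + p) q \<noteq> 0" "mden (rot x (x + p) q - p) q \<noteq> 0"
  shows "rot (rot x (x + p) q) (rot x (x + p) q - p) q = x"
proof -
  have "rot_eqs x (rot x (x + p) q) (rot x (x + p) q - p) q"
    using assms(1) by (intro rot_eqs_swap rot_eqs_rot mink_rot)
  then show ?thesis
    using rot_eqs_unique assms(2) by simp
qed

lemma rot_add_rot: "rot x (x + y) q + rot y (x + y) q = x + y"
proof -
  let ?s = "x + y"
  have "(mink x ?s *\<^sub>R ?s - mink ?s ?s *\<^sub>R x + q *\<^sub>R mcross x ?s)
      + (mink y ?s *\<^sub>R ?s - mink ?s ?s *\<^sub>R y + q *\<^sub>R mcross y ?s) = 0"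
    by (simp add: mink_bilinear mcross_bilinear mcross_anticommute[of y x] algebra_simps)
  then show ?thesis
    unfolding rot_def by (simp add: algebra_simps flip: scaleR_add_right)
qed

lemma Rhat_eq_rot:
  assumes "den x y (a - b) \<noteq> 0"
  shows "Rhat a b (x, y) = (rot x (x + y) (a - b), rot y (x + y) (a - b))"
proof -
  define q where "q = a - b"
  define s where "s = x + y"
  define c where "c = 2 / mden s q"
  have D: "mden s q \<noteq> 0" "den x y q = mden s q" "den y x q = mden s q"
    using assms by (simp_all add: q_def s_def den_eq_mden add.commute)
  have k1: "khat x y q = 1 + c * (mink x s - mink s s)"
    and k2: "1 - khat y x q = c * mink x s"
    unfolding khat_def D(2,3) c_def using D(1)
    by (simp_all add: field_simps mden_def s_def mink_bilinear mink_commute[of y x])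
  have r: "rhat x y q = (1 / mden s q) *\<^sub>R mcross x s"
    by (simp add: rhat_def D(2) vec3_eq_iff s_def algebra_simps)
  have u: "fst (Rhat a b (x, y)) = rot x s q"
    unfolding Rhat_def Let_def q_def[symmetric] fst_conv snd_conv k1 k2 r rot_def c_def[symmetric]
    by (simp add: vec3_eq_iff s_def c_def algebra_simps)
  have "snd (Rhat a b (x, y)) = x + y - fst (Rhat a b (x, y))"
    unfolding Rhat_def Let_def by (simp add: algebra_simps)
  also have "\<dots> = rot y s q"
    using rot_add_rot[of x y q] by (simp add: u s_def algebra_simps)
  finally show ?thesis
    using u by (simp add: s_def q_def prod_eq_iff)
qed

lemma Rhat_dom_rot:
  assumes "Rhat_dom a b (x, y)" "Rhat a b (x, y) = (u, v)"
  shows "mden (x + y) (a - b) \<noteq> 0" "u = rot x (x + y) (a - b)" "v = rot y (x + y) (a - b)"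
  using assms Rhat_eq_rot by (simp_all add: Rhat_dom_def den_eq_mden)

lemma Rhat_conservation:
  assumes "Rhat_dom a b (x, y)" "Rhat a b (x, y) = (u, v)"
  shows "u + v = x + y" "mink u u = mink x x" "mink v v = mink y y"
  using Rhat_dom_rot[OF assms] rot_add_rot mink_rot by simp_all

section \<open>Matrices\<close>

lemma matrix_add_rdistrib: "(A + B) ** C = A ** C + B ** C"
  by (vector matrix_matrix_mult_def sum.distrib[symmetric] distrib_right)

lemma matrix_diff_ldistrib:
  fixes A :: "'a::ring_1^'n^'m"
  shows "A ** (B - C) = A ** B - A ** C"
  by (vector matrix_matrix_mult_def sum_subtractf[symmetric] right_diff_distrib)

lemma matrix_diff_rdistrib:
  fixes A :: "'a::ring_1^'n^'m"
  shows "(A - B) ** C = A ** C - B ** C"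
  by (vector matrix_matrix_mult_def sum_subtractf[symmetric] left_diff_distrib)

lemma mat_matrix_mult_commute:
  fixes A :: "'a::comm_semiring_1^'n^'n"
  shows "mat c ** A = A ** mat c"
  by (simp add: matrix_matrix_mult_def mat_def vec_eq_iff if_distrib if_distribR mult.commute
      cong: if_cong)

lemma matrix_mult_right_cancel:
  fixes P Q K :: "'a::field^'n^'n"
  assumes "det K \<noteq> 0" "P ** K = Q ** K"
  shows "P = Q"
proof -
  obtain K' where K': "K ** K' = mat 1"
    using assms(1) invertible_det_nz invertible_right_inverse by blast
  have "P = (P ** K) ** K'" and "Q = (Q ** K) ** K'"
    by (simp_all flip: matrix_mul_assoc add: K')
  then show ?thesis
    using assms(2) by simp
qed

lemma matrix2_eq_iff:
  "(A::'a^2^2) = B \<longleftrightarrow> A$1$1 = B$1$1 \<and> A$1$2 = B$1$2 \<and> A$2$1 = B$2$1 \<and> A$2$2 = B$2$2"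
  by (simp add: vec_eq_iff forall_2)

lemma matrix2_mult_entry: "((A::'a::semiring_1^2^2) ** B)$i$j = A$i$1 * B$1$j + A$i$2 * B$2$j"
  by (simp add: matrix_matrix_mult_def sum_2)

lemma trace2: "trace (A::'a::semiring_1^2^2) = A$1$1 + A$2$2"
  by (simp add: trace_def sum_2)

text \<open>By Cayley--Hamilton this is the adjugate of a 2x2 matrix.\<close>
definition adj2 :: "'a::comm_ring_1^2^2 \<Rightarrow> 'a^2^2" where
  "adj2 A = mat (trace A) - A"

lemma adj2_entry [simp]:
  "adj2 A $1$1 = A$2$2" "adj2 A $1$2 = - A$1$2" "adj2 A $2$1 = - A$2$1" "adj2 A $2$2 = A$1$1"
  by (simp_all add: adj2_def trace2 mat_def)

lemmas matrix2_simps = matrix2_mult_entry mat_def det_2 trace2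

lemma matrix_mult_adj2: "A ** adj2 A = mat (det A)"
  and adj2_mult_matrix: "adj2 A ** A = mat (det A)"
  by (simp_all add: matrix2_eq_iff matrix2_simps algebra_simps)

lemma adj2_add: "adj2 (A + B) = adj2 A + adj2 B"
  and adj2_mult: "adj2 (A ** B) = adj2 B ** adj2 A"
  by (simp_all add: matrix2_eq_iff matrix2_simps algebra_simps)

lemma adj2_intertwine:
  assumes "M ** G = G ** N" "trace M = trace N"
  shows "adj2 M ** G = G ** adj2 N"
  unfolding adj2_def using assms
  by (simp add: matrix_diff_ldistrib matrix_diff_rdistrib mat_matrix_mult_commute)

section \<open>Lax representation\<close>

definition lax0 :: "real^3 \<Rightarrow> real \<Rightarrow> complex^2^2" where
  "lax0 x a = Lax x a 0"

lemma lax0_entry [simp]: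
  "lax0 x a $1$1 = \<i> * (of_real (x$2) - of_real a)"
  "lax0 x a $1$2 = of_real (x$0 + x$1)"
  "lax0 x a $2$1 = of_real (x$0 - x$1)"
  "lax0 x a $2$2 = - \<i> * (of_real (x$2) + of_real a)"
  by (simp_all add: lax0_def Lax_def)

lemma Lax_eq_lax0: "Lax x a z = lax0 x a + mat z"
  by (simp add: matrix2_eq_iff mat_def) (simp add: Lax_def)

lemma trace_lax0: "trace (lax0 x a) = - 2 * \<i> * of_real a"
  by (simp add: trace2 algebra_simps)

lemma lax0_add:
  assumes "u + v = x + y"
  shows "lax0 u a + lax0 v b = lax0 x a + lax0 y b"
proof -
  have v: "v = x + y - u"
    using assms by (simp add: algebra_simps)
  show ?thesis
    unfolding v by (simp add: matrix2_eq_iff algebra_simps)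
qed

lemma lax0_inject:
  assumes "lax0 u a = lax0 w a"
  shows "u = w"
proof -
  have "of_real (u$0 + u$1) = (of_real (w$0 + w$1) :: complex)"
    and "of_real (u$0 - u$1) = (of_real (w$0 - w$1) :: complex)"
    and "\<i> * (of_real (u$2) - of_real a) = \<i> * (of_real (w$2) - of_real a)"
    using assms lax0_entry by metis+
  then show ?thesis
    by (simp add: vec3_eq_iff complex_eq_iff)
qed

definition intertwiner :: "real^3 \<Rightarrow> real \<Rightarrow> complex^2^2" where
  "intertwiner s q = lax0 s 0 + mat (\<i> * of_real q)"

lemma lax0_diff_adj2: "lax0 y b - adj2 (lax0 x a) = intertwiner (x + y) (a - b)"
  by (simp add: matrix2_eq_iff intertwiner_def mat_def algebra_simps)

lemma det_intertwiner: "det (intertwiner s q) = - of_real (mden s q)"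
  by (simp add: intertwiner_def det_2 mat_def mden_def mink_def complex_eq_iff
      power2_eq_square algebra_simps)

lemma rot_eqs_intertwine:
  assumes "rot_eqs u x s q"
  shows "lax0 u c ** intertwiner s q = intertwiner s q ** lax0 x c"
proof -
  have "(u$0 - x$0) * s$0 - (u$1 - x$1) * s$1 - (u$2 - x$2) * s$2 = 0"
    and "q * (u$0 - x$0) = (u$1 + x$1) * s$2 - (u$2 + x$2) * s$1"
    and "q * (u$1 - x$1) = (u$0 + x$0) * s$2 - (u$2 + x$2) * s$0"
    and "q * (u$2 - x$2) = (u$1 + x$1) * s$0 - (u$0 + x$0) * s$1"
    using assms by (simp_all add: rot_eqs_def mink_def vec3_eq_iff)
  then show ?thesis
    by (simp add: matrix2_eq_iff intertwiner_def matrix2_mult_entry mat_def complex_eq_iff)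
      algebra
qed

lemma Rhat_intertwine:
  assumes "Rhat_dom a b (x, y)" "Rhat a b (x, y) = (u, v)"
  defines "G \<equiv> lax0 y b - adj2 (lax0 x a)"
  shows "lax0 u a ** G = G ** lax0 x a" "lax0 v b ** G = G ** lax0 y b" "det G \<noteq> 0"
proof -
  note uv = Rhat_dom_rot[OF assms(1,2)]
  have G: "G = intertwiner (x + y) (a - b)"
    by (simp add: G_def lax0_diff_adj2)
  show "lax0 u a ** G = G ** lax0 x a" "lax0 v b ** G = G ** lax0 y b"
    unfolding G uv(2,3) using rot_eqs_intertwine rot_eqs_rot uv(1) by blast+
  show "det G \<noteq> 0"
    using uv(1) by (simp add: G det_intertwiner)
qed

lemma Rhat_lax0_refactor:
  assumes "Rhat_dom a b (x, y)" "Rhat a b (x, y) = (u, v)"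
  shows "lax0 u a ** lax0 v b = lax0 y b ** lax0 x a"
proof -
  let ?A = "lax0 x a" and ?B = "lax0 y b"
  let ?G = "?B - adj2 ?A"
  note G = Rhat_intertwine[OF assms]
  have "(lax0 u a ** lax0 v b) ** ?G = ?G ** (?A ** ?B)"
    by (metis G(1,2) matrix_mul_assoc)
  also have "\<dots> = ?B ** ?A ** ?B - mat (det ?A) ** ?B"
    by (simp add: matrix_diff_rdistrib matrix_mul_assoc adj2_mult_matrix)
  also have "\<dots> = (?B ** ?A) ** ?G"
    by (simp add: matrix_diff_ldistrib mat_matrix_mult_commute matrix_mult_adj2
        flip: matrix_mul_assoc)
  finally show ?thesis
    using matrix_mult_right_cancel G(3) by blast
qed

lemma Rhat_Lax:
  assumes "Rhat_dom a b (x, y)" "Rhat a b (x, y) = (u, v)"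
  shows "Lax u a z ** Lax v b z = Lax y b z ** Lax x a z"
proof -
  have "lax0 u a + lax0 v b = lax0 y b + lax0 x a"
    using lax0_add[OF Rhat_conservation(1)[OF assms]] by (simp add: add.commute)
  moreover have "(M + mat z) ** (N + mat z) = M ** N + (M + N) ** mat z + mat z ** mat z"
    for M N :: "complex^2^2"
    by (simp add: matrix_add_ldistrib matrix_add_rdistrib mat_matrix_mult_commute[of z N] add_ac)
  ultimately show ?thesis
    unfolding Lax_eq_lax0 by (simp add: Rhat_lax0_refactor[OF assms])
qed

section \<open>The Yang--Baxter property\<close>

lemma Rhat_YB_first:
  assumes "Rhat a b (x, y) = (x1, y1)" "Rhat a c (x1, z) = (x2, z2)"
    and "Rhat b c (y, z) = (y1', z1')" "Rhat a c (x, z1') = (x2', z2')"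
    and "Rhat a b (x2', y1') = (x3', y3')"
    and "Rhat_dom a b (x, y)" "Rhat_dom a c (x1, z)"
    and "Rhat_dom b c (y, z)" "Rhat_dom a c (x, z1')" "Rhat_dom a b (x2', y1')"
  shows "x2 = x3'"
proof -
  let ?A = "lax0 x a" and ?B = "lax0 y b" and ?C = "lax0 z c"
  let ?G1 = "?B - adj2 ?A" and ?G2 = "?C - adj2 (lax0 x1 a)"
  let ?H2 = "lax0 z1' c - adj2 ?A" and ?H3 = "lax0 y1' b - adj2 (lax0 x2' a)"
  define K where "K = ?C ** ?B - ?C ** adj2 ?A - ?B ** adj2 ?A + adj2 ?A ** adj2 ?A"
  note R12 = Rhat_intertwine[OF assms(6,1)] and R13 = Rhat_intertwine[OF assms(7,2)]
  note R13' = Rhat_intertwine[OF assms(9,4)] and R12' = Rhat_intertwine[OF assms(10,5)]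
  have "?G2 ** ?G1 = ?C ** ?G1 - ?G1 ** adj2 ?A"
    using adj2_intertwine[OF R12(1)] by (simp add: matrix_diff_rdistrib trace_lax0)
  then have G: "?G2 ** ?G1 = K"
    by (simp add: K_def matrix_diff_ldistrib matrix_diff_rdistrib)
  have "?H3 ** ?H2 = lax0 y1' b ** ?H2 - ?H2 ** adj2 ?A"
    using adj2_intertwine[OF R13'(1)] by (simp add: matrix_diff_rdistrib trace_lax0)
  also have "\<dots> = lax0 y1' b ** lax0 z1' c - (lax0 y1' b + lax0 z1' c) ** adj2 ?A
      + adj2 ?A ** adj2 ?A"
    by (simp add: matrix_diff_ldistrib matrix_diff_rdistrib matrix_add_rdistrib)
  finally have H: "?H3 ** ?H2 = K"
    using Rhat_lax0_refactor[OF assms(8,3)] lax0_add[OF Rhat_conservation(1)[OF assms(8,3)]]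
    by (simp add: K_def matrix_add_rdistrib)
  have "lax0 x2 a ** K = K ** ?A"
    unfolding G[symmetric] by (metis R12(1) R13(1) matrix_mul_assoc)
  moreover have "lax0 x3' a ** K = K ** ?A"
    unfolding H[symmetric] by (metis R13'(1) R12'(1) matrix_mul_assoc)
  moreover have "det K \<noteq> 0"
    unfolding G[symmetric] using R12(3) R13(3) by (simp add: det_mul)
  ultimately show ?thesis
    using matrix_mult_right_cancel lax0_inject by metis
qed

lemma Rhat_YB_third:
  assumes "Rhat a b (x, y) = (x1, y1)" "Rhat a c (x1, z) = (x2, z2)"
    and "Rhat b c (y1, z2) = (y3, z3)"
    and "Rhat b c (y, z) = (y1', z1')" "Rhat a c (x, z1') = (x2', z2')"
    and "Rhat_dom a b (x, y)" "Rhat_dom a c (x1, z)" "Rhat_dom b c (y1, z2)"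
    and "Rhat_dom b c (y, z)" "Rhat_dom a c (x, z1')"
  shows "z3 = z2'"
proof -
  let ?A = "lax0 x a" and ?B = "lax0 y b" and ?C = "lax0 z c"
  let ?G2 = "?C - adj2 (lax0 x1 a)" and ?G3 = "lax0 z2 c - adj2 (lax0 y1 b)"
  let ?H1 = "?C - adj2 ?B" and ?H2 = "lax0 z1' c - adj2 ?A"
  define K where "K = ?C ** ?C - (adj2 ?A + adj2 ?B) ** ?C + adj2 ?A ** adj2 ?B"
  note R13 = Rhat_intertwine[OF assms(7,2)] and R23 = Rhat_intertwine[OF assms(8,3)]
  note R23' = Rhat_intertwine[OF assms(9,4)] and R13' = Rhat_intertwine[OF assms(10,5)]
  have "?G3 ** ?G2 = ?C ** ?C - (adj2 (lax0 x1 a) + adj2 (lax0 y1 b)) ** ?C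
      + adj2 (lax0 y1 b) ** adj2 (lax0 x1 a)"
    using R13(2) by (simp add: matrix_diff_ldistrib matrix_diff_rdistrib matrix_add_rdistrib)
  then have G: "?G3 ** ?G2 = K"
    using Rhat_lax0_refactor[OF assms(6,1)] lax0_add[OF Rhat_conservation(1)[OF assms(6,1)]]
    by (simp add: K_def adj2_add[symmetric] adj2_mult[symmetric])
  have H: "?H2 ** ?H1 = K"
    using R23'(2) by (simp add: K_def matrix_diff_ldistrib matrix_diff_rdistrib matrix_add_rdistrib)
  have "lax0 z3 c ** K = K ** ?C"
    unfolding G[symmetric] by (metis R13(2) R23(2) matrix_mul_assoc)
  moreover have "lax0 z2' c ** K = K ** ?C"
    unfolding H[symmetric] by (metis R23'(2) R13'(2) matrix_mul_assoc)
  moreover have "det K \<noteq> 0"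
    unfolding G[symmetric] using R13(3) R23(3) by (simp add: det_mul)
  ultimately show ?thesis
    using matrix_mult_right_cancel lax0_inject by metis
qed

lemma parametric_YB_map_Rhat: "parametric_YB_map Rhat_dom Rhat"
  unfolding parametric_YB_map_def
proof (intro allI, goal_cases)
  case (1 a b c x y z)
  obtain x1 y1 where l12: "Rhat a b (x, y) = (x1, y1)" by fastforce
  obtain x2 z2 where l13: "Rhat a c (x1, z) = (x2, z2)" by fastforce
  obtain y3 z3 where l23: "Rhat b c (y1, z2) = (y3, z3)" by fastforce
  obtain y1' z1' where r23: "Rhat b c (y, z) = (y1', z1')" by fastforce
  obtain x2' z2' where r13: "Rhat a c (x, z1') = (x2', z2')" by fastforce
  obtain x3' y3' where r12: "Rhat a b (x2', y1') = (x3', y3')" by fastforce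
  have "x2 = x3' \<and> y3 = y3' \<and> z3 = z2'"
    if "Rhat_dom a b (x, y)" "Rhat_dom a c (x1, z)" "Rhat_dom b c (y1, z2)"
      "Rhat_dom b c (y, z)" "Rhat_dom a c (x, z1')" "Rhat_dom a b (x2', y1')"
  proof -
    have x: "x2 = x3'"
      using Rhat_YB_first[OF l12 l13 r23 r13 r12] that by blast
    have z: "z3 = z2'"
      using Rhat_YB_third[OF l12 l13 l23 r23 r13] that by blast
    have "x1 + y1 = x + y" "x2 + z2 = x1 + z" "y3 + z3 = y1 + z2"
      "y1' + z1' = y + z" "x2' + z2' = x + z1'" "x3' + y3' = x2' + y1'"
      using Rhat_conservation(1) l12 l13 l23 r23 r13 r12 that by blast+
    then have "x2 + y3 + z3 = x + y + z" "x3' + y3' + z2' = x + y + z"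
      by (metis add.commute add.left_commute)+
    then have "y3 = y3'"
      using x z by (metis add_left_cancel add_right_cancel)
    with x z show ?thesis
      by blast
  qed
  then show ?case
    by (simp add: l12 l13 l23 r23 r13 r12)
qed

section \<open>Polynomial functions on R^3\<close>

definition monomial3 :: "nat \<times> nat \<times> nat \<Rightarrow> real^3 \<Rightarrow> real" where
  "monomial3 e x = x$0 ^ fst e * x$1 ^ fst (snd e) * x$2 ^ snd (snd e)"

lemma monomial3_add: "monomial3 (e + e') x = monomial3 e x * monomial3 e' x"
  by (simp add: monomial3_def power_add algebra_simps)

lemma poly3_iff_monomials:
  "poly3 p \<longleftrightarrow> (\<exists>c S. finite S \<and> (\<forall>x. p x = (\<Sum>e\<in>S. c e * monomial3 e x)))"
  unfolding poly3_def monomial3_def by (simp add: case_prod_beta mult.assoc)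

lemma poly3_monomial_sum:
  assumes "finite T" "\<And>x. p x = (\<Sum>t\<in>T. d t * monomial3 (e t) x)"
  shows "poly3 p"
  unfolding poly3_iff_monomials
proof (intro exI conjI allI)
  show "finite (e ` T)"
    using assms(1) by simp
  fix x
  have "(\<Sum>m\<in>e ` T. (\<Sum>t\<in>{t\<in>T. e t = m}. d t) * monomial3 m x)
      = (\<Sum>m\<in>e ` T. (\<Sum>t\<in>{t\<in>T. e t = m}. d t * monomial3 (e t) x))"
    by (auto simp: sum_distrib_right intro!: sum.cong)
  also have "\<dots> = (\<Sum>t\<in>T. d t * monomial3 (e t) x)"
    using assms(1) by (intro sum.group) auto
  finally show "p x = (\<Sum>m\<in>e ` T. (\<Sum>t\<in>{t\<in>T. e t = m}. d t) * monomial3 m x)"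
    using assms(2) by simp
qed

lemma poly3_const: "poly3 (\<lambda>x. c)"
  by (rule poly3_monomial_sum[where T = "{()}" and d = "\<lambda>_. c" and e = "\<lambda>_. 0"])
    (simp_all add: monomial3_def)

lemma poly3_component: "poly3 (\<lambda>x. x $ i)"
proof (rule poly3_monomial_sum[where T = "{()}" and d = "\<lambda>_. 1"
      and e = "\<lambda>_. if i = 0 then (1, 0, 0) else if i = 1 then (0, 1, 0) else (0, 0, 1)"])
  show "x $ i = (\<Sum>t\<in>{()}. 1 * monomial3
      (if i = 0 then (1, 0, 0) else if i = 1 then (0, 1, 0) else (0, 0, 1)) x)" for x
    using exhaust_3_from_0[of i] by (auto simp: monomial3_def)
qed simp

lemma poly3_add:
  assumes "poly3 f" "poly3 g"
  shows "poly3 (\<lambda>x. f x + g x)"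
proof -
  obtain c1 S1 where 1: "finite S1" "\<And>x. f x = (\<Sum>e\<in>S1. c1 e * monomial3 e x)"
    using assms(1) unfolding poly3_iff_monomials by blast
  obtain c2 S2 where 2: "finite S2" "\<And>x. g x = (\<Sum>e\<in>S2. c2 e * monomial3 e x)"
    using assms(2) unfolding poly3_iff_monomials by blast
  show ?thesis
    by (rule poly3_monomial_sum[where T = "S1 <+> S2" and d = "case_sum c1 c2" and e = "case_sum id id"])
      (use 1 2 in \<open>auto simp: sum.Plus o_def\<close>)
qed

lemma poly3_mult:
  assumes "poly3 f" "poly3 g"
  shows "poly3 (\<lambda>x. f x * g x)"
proof -
  obtain c1 S1 where 1: "finite S1" "\<And>x. f x = (\<Sum>e\<in>S1. c1 e * monomial3 e x)"
    using assms(1) unfolding poly3_iff_monomials by blast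
  obtain c2 S2 where 2: "finite S2" "\<And>x. g x = (\<Sum>e\<in>S2. c2 e * monomial3 e x)"
    using assms(2) unfolding poly3_iff_monomials by blast
  show ?thesis
  proof (rule poly3_monomial_sum[where T = "S1 \<times> S2" and d = "\<lambda>(e, e'). c1 e * c2 e'"
        and e = "\<lambda>(e, e'). e + e'"])
    show "finite (S1 \<times> S2)"
      using 1 2 by simp
    show "f x * g x = (\<Sum>t\<in>S1 \<times> S2. (case t of (e, e') \<Rightarrow> c1 e * c2 e') *
        monomial3 (case t of (e, e') \<Rightarrow> e + e') x)" for x
      by (simp add: 1 2 sum_product sum.cartesian_product monomial3_add case_prod_unfold
          mult_ac)
  qed
qed

lemma poly3_uminus: "poly3 f \<Longrightarrow> poly3 (\<lambda>x. - f x)"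
  using poly3_mult[OF poly3_const[of "-1"]] by simp

lemma poly3_diff: "poly3 f \<Longrightarrow> poly3 g \<Longrightarrow> poly3 (\<lambda>x. f x - g x)"
  using poly3_add[OF _ poly3_uminus] by simp

lemma poly3_power: "poly3 f \<Longrightarrow> poly3 (\<lambda>x. f x ^ n)"
  by (induction n) (simp_all add: poly3_const poly3_mult)

lemmas poly3_intros = poly3_const poly3_component poly3_add poly3_mult poly3_diff poly3_power

section \<open>Quadrirationality\<close>

definition rot_numer :: "real^3 \<Rightarrow> real^3 \<Rightarrow> real \<Rightarrow> real^3" where
  "rot_numer x s q = mden s q *\<^sub>R x + 2 *\<^sub>R (mink x s *\<^sub>R s - mink s s *\<^sub>R x + q *\<^sub>R mcross x s)"

lemma rot_eq_numer: "mden s q \<noteq> 0 \<Longrightarrow> rot x s q = (1 / mden s q) *\<^sub>R rot_numer x s q"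
  unfolding rot_def rot_numer_def by (simp add: scaleR_add_right)

lemma poly3_mden_shift: "poly3 (\<lambda>x. mden (x + p) q)"
  unfolding mden_def mink_def by (simp add: power2_eq_square) (intro poly3_intros)

lemma poly3_rot_numer_shift: "poly3 (\<lambda>x. rot_numer x (x + p) q $ i)"
  using exhaust_3_from_0[of i] unfolding rot_numer_def mden_def mink_def
  by (auto simp: power2_eq_square intro!: poly3_intros)

lemma rational_map3_rot:
  assumes "mden p q \<noteq> 0" "\<And>x. mden (x + p) q \<noteq> 0 \<Longrightarrow> f x = rot x (x + p) q"
  shows "rational_map3 f"
  unfolding rational_map3_def
proof (intro exI conjI allI impI)
  show "poly3 (\<lambda>x. rot_numer x (x + p) q $ i)" for i
    by (rule poly3_rot_numer_shift)
  show "nonzero_poly3 (\<lambda>x. mden (x + p) q)"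
    unfolding nonzero_poly3_def using poly3_mden_shift assms(1) by (metis add_0)
  show "f x = (\<chi> i. rot_numer x (x + p) q $ i / mden (x + p) q)" if "mden (x + p) q \<noteq> 0" for x
    using assms(2) rot_eq_numer that by (simp add: vec_eq_iff)
qed

definition rot_guard :: "real^3 \<Rightarrow> real \<Rightarrow> real^3 \<Rightarrow> real" where
  "rot_guard p q x = mden (x + p) q *
     (mink (rot_numer x (x + p) q - mden (x + p) q *\<^sub>R p) (rot_numer x (x + p) q - mden (x + p) q *\<^sub>R p)
      + q\<^sup>2 * (mden (x + p) q)\<^sup>2)"

lemma poly3_rot_guard: "poly3 (rot_guard p q)"
  unfolding rot_guard_def mink_def vector_minus_component vector_scaleR_component real_scaleR_def
  by (intro poly3_intros poly3_mden_shift poly3_rot_numer_shift)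

lemma rot_guard_eq:
  assumes "mden (x + p) q \<noteq> 0"
  shows "rot_guard p q x = (mden (x + p) q)^3 * mden (rot x (x + p) q - p) q"
proof -
  define D where "D = mden (x + p) q"
  define w where "w = rot_numer x (x + p) q - D *\<^sub>R p"
  have D: "D \<noteq> 0"
    using assms by (simp add: D_def)
  have "rot x (x + p) q - p = (1 / D) *\<^sub>R w"
    using D by (simp add: rot_eq_numer[OF assms] D_def[symmetric] w_def scaleR_diff_right)
  then have "mden (rot x (x + p) q - p) q = (mink w w + q\<^sup>2 * D\<^sup>2) / D\<^sup>2"
    using D by (simp add: mden_def mink_bilinear field_simps power2_eq_square)
  moreover have "rot_guard p q x = D * (mink w w + q\<^sup>2 * D\<^sup>2)"
    by (simp add: rot_guard_def D_def w_def)
  ultimately show ?thesis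
    unfolding D_def[symmetric] using D by (simp add: field_simps power2_eq_square power3_eq_cube)
qed

lemma rot_guard_nonzero:
  assumes "rot_guard p q x \<noteq> 0"
  shows "mden (x + p) q \<noteq> 0" "mden (rot x (x + p) q - p) q \<noteq> 0"
proof -
  show D: "mden (x + p) q \<noteq> 0"
    using assms by (auto simp: rot_guard_def)
  show "mden (rot x (x + p) q - p) q \<noteq> 0"
    using assms rot_guard_eq[OF D] by auto
qed

lemma rot_guard_0_nonzero:
  assumes "mden p q \<noteq> 0"
  shows "rot_guard p q 0 \<noteq> 0"
proof -
  have "rot 0 p q = 0"
    by (simp add: rot_def mink_bilinear vec3_eq_iff)
  then show ?thesis
    using assms rot_guard_eq[of 0 p q] by (simp add: mden_minus)
qed

lemma birational3_rot:
  assumes "mden p q \<noteq> 0" "\<And>x. mden (x + p) q \<noteq> 0 \<Longrightarrow> f x = rot x (x + p) q"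
  shows "birational3 f"
  unfolding birational3_def
proof (intro conjI exI allI impI)
  have p': "mden (- p) q \<noteq> 0"
    using assms(1) by (simp add: mden_minus)
  show "rational_map3 f"
    using assms by (rule rational_map3_rot)
  show "rational_map3 (\<lambda>u. rot u (u + - p) q)"
    by (rule rational_map3_rot[OF p']) (rule refl)
  show "nonzero_poly3 (rot_guard p q)" "nonzero_poly3 (rot_guard (- p) q)"
    unfolding nonzero_poly3_def using poly3_rot_guard rot_guard_0_nonzero assms(1) p' by blast+
  show "rot (f x) (f x + - p) q = x" if "rot_guard p q x \<noteq> 0" for x
    using rot_rot_inverse[OF rot_guard_nonzero[OF that]] assms(2)[OF rot_guard_nonzero(1)[OF that]]
    by simp
  show "f (rot u (u + - p) q) = u" if "rot_guard (- p) q u \<noteq> 0" for u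
    using rot_rot_inverse[OF rot_guard_nonzero[OF that]] assms(2) rot_guard_nonzero(2)[OF that]
    by simp
qed

lemma nonzero_poly3_mden: "nonzero_poly3 (\<lambda>s. mden s q)"
  unfolding nonzero_poly3_def
proof
  show "poly3 (\<lambda>s. mden s q)"
    using poly3_mden_shift[of 0 q] by simp
  have "mden (\<chi> i. if i = 0 then 1 else 0) q = 1 + q\<^sup>2"
    by (simp add: mden_def mink_def)
  then show "\<exists>s. mden s q \<noteq> 0"
    by (metis add_pos_nonneg less_irrefl zero_less_one zero_le_power2)
qed

lemma quadrirational3_Rhat: "quadrirational3 Rhat"
  unfolding quadrirational3_def
proof (intro allI conjI exI impI)
  fix a b :: real
  show "birational3 (\<lambda>x. fst (Rhat a b (x, y)))" if "mden y (a - b) \<noteq> 0" for y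
    using that by (rule birational3_rot) (simp add: Rhat_eq_rot den_eq_mden)
  show "birational3 (\<lambda>y. snd (Rhat a b (x, y)))" if "mden x (a - b) \<noteq> 0" for x
    using that by (rule birational3_rot) (simp add: Rhat_eq_rot den_eq_mden add.commute)
qed (rule nonzero_poly3_mden)+

theorem theorem4p1:
  shows "parametric_YB_map Rhat_dom Rhat \<and> quadrirational3 Rhat \<and>
    (\<forall>a b x y u v. Rhat_dom a b (x, y) \<longrightarrow> Rhat a b (x, y) = (u, v) \<longrightarrow>
       u + v = x + y \<and> mink u u = mink x x \<and> mink v v = mink y y \<and>
       (\<forall>z. Lax u a z ** Lax v b z = Lax y b z ** Lax x a z))"
proof (intro conjI allI impI)
  show "parametric_YB_map Rhat_dom Rhat"
    by (rule parametric_YB_map_Rhat)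
  show "quadrirational3 Rhat"
    by (rule quadrirational3_Rhat)
  fix a b x y u v z
  assume "Rhat_dom a b (x, y)" "Rhat a b (x, y) = (u, v)"
  then show "u + v = x + y" "mink u u = mink x x" "mink v v = mink y y"
    and "Lax u a z ** Lax v b z = Lax y b z ** Lax x a z"
    by (rule Rhat_conservation Rhat_Lax)+
qed

end
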